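(* For every $q\in\mathbb N$, \[ \frac{2^{4q}}{2q\binom{2q}{q}}=\sum_{l=0}^{q} \binom{2l}{l} \binom{2q-2l}{q-l} \frac{1}{(2l-1)^2}. \] *)

theory Defs
  imports Complex_Main
begin

end

theory Submission
  imports Defs
begin

(* Writing c(n) for the central binomial coefficient, both sides satisfy the first order
   recurrence a(q+1) = 8q/(2q+1) a(q) for q >= 1 and both equal 4 at q = 1.  For the left
   side this is (n+1) c(n+1) = 2(2n+1) c(n).  For the sum S(q) = conv_sum q it is found by
   creative telescoping (Zeilberger's algorithm): the summand F(q,l) = conv_term q l satisfies
     (2q+1) F(q+1,l) - 8q F(q,l) = G(q,l+1) - G(q,l),
   with the certificate G(q,l) = l(q+2-2l) c(l) c(q+1-l) / ((2l-1) q (q+1)).  Summing over l <= q leaves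
   G(q,q+1) = -c(q+1)/(2q+1), which cancels the extra term F(q+1,q+1) of (2q+1) S(q+1). *)

lemma double_of_nat_minus_one_neq_0: "2 * real l - 1 \<noteq> 0"
proof -
  have "2 * l \<noteq> 1" by presburger
  then have "real (2 * l) \<noteq> 1" by (metis of_nat_1 of_nat_eq_iff)
  then show ?thesis by simp
qed

lemma Suc_times_central_binomial:
  "Suc n * ((2 * Suc n) choose Suc n) = 2 * (2 * n + 1) * ((2 * n) choose n)"
proof -
  have "Suc n * ((2 * Suc n) choose Suc n) = 2 * (Suc n * (Suc (2 * n) choose n))"
    using Suc_times_binomial[of n "Suc (2 * n)"] by simp
  also have "Suc n * (Suc (2 * n) choose n) = Suc (2 * n) * ((2 * n) choose n)"
    by (metis Suc_times_binomial Suc_times_binomial_add mult_2)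
  finally show ?thesis by simp
qed

definition central_binomial :: "nat \<Rightarrow> real" where
  "central_binomial n = real ((2 * n) choose n)"

lemma central_binomial_0 [simp]: "central_binomial 0 = 1"
  by (simp add: central_binomial_def)

lemma central_binomial_pos: "central_binomial n > 0"
  by (simp add: central_binomial_def)

lemma central_binomial_Suc:
  "central_binomial (Suc n) = 2 * (2 * real n + 1) / (real n + 1) * central_binomial n"
proof -
  have "(real n + 1) * central_binomial (Suc n) = 2 * (2 * real n + 1) * central_binomial n"
    unfolding central_binomial_def
    using arg_cong[OF Suc_times_central_binomial[of n], of real]
    by (simp only: of_nat_mult of_nat_Suc of_nat_add of_nat_numeral of_nat_1 add.commute)
  then show ?thesis by (simp add: field_simps)
qed

definition conv_term :: "nat \<Rightarrow> nat \<Rightarrow> real" where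
  "conv_term q l = central_binomial l * central_binomial (q - l) / (2 * real l - 1)^2"

definition conv_sum :: "nat \<Rightarrow> real" where
  "conv_sum q = (\<Sum>l = 0..q. conv_term q l)"

definition conv_certificate :: "nat \<Rightarrow> nat \<Rightarrow> real" where
  "conv_certificate q l = real l * (real q + 2 - 2 * real l) * central_binomial l * central_binomial (q + 1 - l)
     / ((2 * real l - 1) * real q * (real q + 1))"

(* The telescoping relation divided by c(l) c(q - l), with x = l and y = q - l. *)
lemma conv_certificate_rational_identity:
  fixes x y :: real
  assumes "2 * x - 1 \<noteq> 0" "y + 1 \<noteq> 0" "x + y \<noteq> 0" "x + y + 1 \<noteq> 0"
  shows "(2 * (x + y) + 1) * (2 * (2 * y + 1) / ((y + 1) * (2 * x - 1)^2)) - 8 * (x + y) * (1 / (2 * x - 1)^2)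
       = 2 * (y - x) / ((x + y) * (x + y + 1))
         - 2 * x * (y - x + 2) * (2 * y + 1) / ((y + 1) * (2 * x - 1) * (x + y) * (x + y + 1))"
  using assms by (simp add: divide_simps) (simp add: algebra_simps power2_eq_square)

lemma conv_term_telescoping:
  assumes "l \<le> q" "1 \<le> q"
  shows "(2 * real q + 1) * conv_term (Suc q) l - 8 * real q * conv_term q l
       = conv_certificate q (Suc l) - conv_certificate q l"
proof -
  obtain m where q: "q = l + m" using assms(1) by (metis le_add_diff_inverse)
  have pos: "0 < real l + real m" using assms q by simp
  define c where "c = central_binomial l * central_binomial m"
  have term_Suc_q: "conv_term (Suc q) l = c * (2 * (2 * real m + 1) / ((real m + 1) * (2 * real l - 1)^2))"
    by (simp add: conv_term_def c_def q Suc_diff_le central_binomial_Suc)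
  have term_q: "conv_term q l = c * (1 / (2 * real l - 1)^2)"
    by (simp add: conv_term_def c_def q)
  have cert_Suc_l: "conv_certificate q (Suc l) = c * (2 * (real m - real l) / ((real l + real m) * (real l + real m + 1)))"
    using pos by (simp add: conv_certificate_def c_def q central_binomial_Suc divide_simps) (simp add: algebra_simps)
  have cert_l: "conv_certificate q l = c * (2 * real l * (real m - real l + 2) * (2 * real m + 1)
      / ((real m + 1) * (2 * real l - 1) * (real l + real m) * (real l + real m + 1)))"
    using pos double_of_nat_minus_one_neq_0[of l]
    by (simp add: conv_certificate_def c_def q Suc_diff_le central_binomial_Suc divide_simps)
      (intro disjI2, simp add: algebra_simps)
  have real_q: "real q = real l + real m" using q by simp
  have scale: "k1 * (c * a) - k2 * (c * b) = c * u - c * v"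
    if "k1 * a - k2 * b = u - v" for k1 k2 a b u v :: real
    using arg_cong[OF that, of "(*) c"] by (simp add: algebra_simps)
  show ?thesis
    unfolding term_Suc_q term_q cert_Suc_l cert_l real_q
    by (rule scale, rule conv_certificate_rational_identity) (use pos double_of_nat_minus_one_neq_0 in auto)
qed

lemma conv_sum_Suc:
  assumes "1 \<le> q"
  shows "conv_sum (Suc q) = 8 * real q / (2 * real q + 1) * conv_sum q"
proof -
  have "(2 * real q + 1) * (\<Sum>l = 0..q. conv_term (Suc q) l) - 8 * real q * conv_sum q
      = (\<Sum>l = 0..q. (2 * real q + 1) * conv_term (Suc q) l - 8 * real q * conv_term q l)"
    by (simp add: conv_sum_def sum_distrib_left sum_subtractf)
  also have "\<dots> = (\<Sum>l = 0..q. conv_certificate q (Suc l) - conv_certificate q l)"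
    using conv_term_telescoping assms by (intro sum.cong) auto
  also have "\<dots> = conv_certificate q (Suc q) - conv_certificate q 0"
    by (rule sum_Suc_diff) simp
  also have "\<dots> = - central_binomial (Suc q) / (2 * real q + 1)"
    using assms by (simp add: conv_certificate_def divide_simps) (simp add: algebra_simps)
  finally have telescoped: "(2 * real q + 1) * (\<Sum>l = 0..q. conv_term (Suc q) l) - 8 * real q * conv_sum q
      = - central_binomial (Suc q) / (2 * real q + 1)" .
  have "conv_sum (Suc q) = (\<Sum>l = 0..q. conv_term (Suc q) l) + central_binomial (Suc q) / (2 * real q + 1)^2"
    by (simp add: conv_sum_def conv_term_def)
  then have "(2 * real q + 1) * conv_sum (Suc q)
      = (2 * real q + 1) * (\<Sum>l = 0..q. conv_term (Suc q) l) + central_binomial (Suc q) / (2 * real q + 1)"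
    by (simp only: distrib_left) (simp add: power2_eq_square)
  also have "\<dots> = 8 * real q * conv_sum q"
    using telescoped by simp
  finally show ?thesis
    by (simp add: field_simps)
qed

lemma pow_div_central_binomial_Suc:
  assumes "1 \<le> q"
  shows "2 ^ (4 * Suc q) / (2 * real (Suc q) * central_binomial (Suc q))
       = 8 * real q / (2 * real q + 1) * (2 ^ (4 * q) / (2 * real q * central_binomial q))"
  using assms central_binomial_pos[of q]
  by (simp add: central_binomial_Suc power_add divide_simps) (simp add: algebra_simps)

theorem lemma5p3:
  fixes q :: nat
  assumes "q \<ge> 1"
  shows "2 ^ (4 * q) / (2 * real q * real ((2 * q) choose q)) =
         (\<Sum>l = 0..q. real ((2 * l) choose l) * real ((2 * q - 2 * l) choose (q - l))
              / (2 * real l - 1) ^ 2)"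
proof -
  have "2 ^ (4 * q) / (2 * real q * central_binomial q) = conv_sum q"
    using assms
  proof (induction q rule: dec_induct)
    case base
    show ?case by (simp add: conv_sum_def conv_term_def central_binomial_def)
  next
    case (step n)
    then show ?case by (simp only: pow_div_central_binomial_Suc conv_sum_Suc)
  qed
  then show ?thesis
    by (simp add: conv_sum_def conv_term_def central_binomial_def diff_mult_distrib2)
qed

end
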